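(* Let $g(x)=\alpha x^{q^k}+\beta x$ with $\alpha\in\mathbb{F}_{q^n}^*$, $\beta\in\mathbb{F}_{q^n}$, $1\le k<n$, let $f(y)=a_dy^{q^d}$ with $a_d\in\mathbb{F}_{q^n}^*$, $0\le d<n$, and let $0\le h<n$. (1) If $d=h$ or $\beta=0$, then $L_g\cap\sigma(L_f)\ne\emptyset$ if and only if $\mathrm{N}_{q^n/q^e}\!\left(\frac{1-\beta a_d}{\alpha a_d}\right)=1$, where $e=\gcd(n,k,d-h)$. (2) If $d\ne h$, $\beta\ne0$ and $k+|d-h|\le n/2$, then $L_g\cap\sigma(L_f)\neq\emptyset$.
   Context: Let $q$ be a prime power, $n\ge2$. For $e\mid n$, $\mathrm{N}_{q^n/q^e}(x)=x^{(q^n-1)/(q^e-1)}$; $\gcd(n,k,0)=\gcd(n,k)$. For $q$-polynomials $g,f$ over $\mathbb{F}_{q^n}$ and an integer $0\le h<n$: $L_g=\{\langle(x,g(x))\rangle_{\mathbb{F}_{q^n}}:x\in\mathbb{F}_{q^n}^*\}$ and $\sigma(L_f)=\{\langle(f(y),y^{q^h})\rangle_{\mathbb{F}_{q^n}}:y\in\mathbb{F}_{q^n}^*\}$ (the image of $L_f=\{\langle(y^{q^h},f(y))\rangle\}$ under $\langle(X_0,X_1)\rangle\mapsto\langle(X_1,X_0)\rangle$). *)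

theory Defs
  imports "HOL-Computational_Algebra.Primes" "HOL-Library.Cardinality"
begin

text \<open>The F_{q^n}-span of a vector of F_{q^n}^2, i.e. a point of PG(1,q^n).\<close>
definition span1 :: "'a::field \<times> 'a \<Rightarrow> ('a \<times> 'a) set" where
  "span1 v = {(c * fst v, c * snd v) | c. True}"

definition Lset :: "('a::field \<Rightarrow> 'a) \<Rightarrow> ('a \<times> 'a) set set" where
  "Lset g = {span1 (x, g x) | x. x \<noteq> 0}"

definition sigmaL :: "nat \<Rightarrow> nat \<Rightarrow> ('a::field \<Rightarrow> 'a) \<Rightarrow> ('a \<times> 'a) set set" where
  "sigmaL q h f = {span1 (f y, y ^ (q ^ h)) | y. y \<noteq> 0}"

definition normq :: "nat \<Rightarrow> nat \<Rightarrow> nat \<Rightarrow> 'a::field \<Rightarrow> 'a" where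
  "normq q n e z = z ^ ((q ^ n - 1) div (q ^ e - 1))"

definition prime_power :: "nat \<Rightarrow> bool" where
  "prime_power q \<longleftrightarrow> (\<exists>p m. prime p \<and> m > 0 \<and> q = p ^ m)"

end

(*
  A point of L_g \<inter> \<sigma>(L_f) is a pair x, y \<noteq> 0 with
  \<alpha> x^(q^k-1) + \<beta> = y^(q^h) / (a_d y^(q^d)).  Because the Frobenius map is a bijection,
  y \<mapsto> y^(q^d) / y^(q^h) has the same image as w \<mapsto> w^(q^s-1), s = |d - h|, so everything
  happens among subgroups of powers of the cyclic group F*, of order q^n - 1.

  (1) If d = h or \<beta> = 0 the condition reads x^(q^k-1) (y^(q^d)/y^(q^h)) = (1 - \<beta> a_d)/(\<alpha> a_d):
  membership in the product of the subgroups of (q^k-1)-th and (q^s-1)-th powers.  That product is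
  the subgroup of (q^e-1)-th powers, e = gcd(n, k, s), since
  gcd(q^k-1, q^s-1, q^n-1) = q^e-1, and this subgroup is the kernel of N_{q^n/q^e}.

  (2) Otherwise one needs a solution of c\<^sub>1 u^m + c\<^sub>2 v^l = 1 with m = gcd(q^k-1, q^n-1),
  l = gcd(q^s-1, q^n-1).  Counting solutions with multiplicative characters gives q^n - 2 plus
  (m l - 1) Jacobi sums, of modulus 1 or at most q^(n/2); since m l \<le> q^(k+s) \<le> q^(n/2),
  the main term wins.
*)

theory Submission
  imports Defs "HOL-Algebra.Multiplicative_Group" "HOL-Algebra.Algebraic_Closure_Type"
begin

lemma power_mod_of_power_eq_one:
  fixes x :: "'a::monoid_mult"
  assumes "x ^ n = 1"
  shows "x ^ m = x ^ (m mod n)"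
proof -
  have "x ^ m = x ^ (n * (m div n) + m mod n)" by simp
  also have "\<dots> = (x ^ n) ^ (m div n) * x ^ (m mod n)" by (simp only: power_add power_mult)
  finally show ?thesis using assms by simp
qed

lemma power_minus_one_dvd_power_mult_minus_one:
  fixes q :: nat
  assumes "q > 0"
  shows "q ^ b - 1 dvd q ^ (b * t) - 1"
proof -
  have "int q ^ b - 1 dvd (int q ^ b) ^ t - 1"
    using power_diff_1_eq[of "int q ^ b" t] by (metis dvd_triv_left)
  then have "int (q ^ b - 1) dvd int (q ^ (b * t) - 1)"
    using assms by (simp add: of_nat_diff power_mult)
  then show ?thesis by (simp only: of_nat_dvd_iff)
qed

lemma gcd_power_minus_one:
  fixes q :: nat
  assumes "q > 0"
  shows "gcd (q ^ a - 1) (q ^ b - 1) = q ^ gcd a b - 1"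
proof (induction a b rule: gcd_nat_induct)
  case (step a b)
  define t r where "t = a div b" and "r = a mod b"
  obtain K where K: "q ^ (b * t) - 1 = (q ^ b - 1) * K"
    using power_minus_one_dvd_power_mult_minus_one[OF assms] by blast
  have "q ^ a - 1 = q ^ r * (q ^ (b * t) - 1) + (q ^ r - 1)"
  proof -
    have "q ^ r \<ge> 1" "q ^ (b * t) \<ge> 1" using assms by simp_all
    moreover have "q ^ a = q ^ r * q ^ (b * t)"
      by (simp add: t_def r_def power_add[symmetric])
    ultimately show ?thesis by (simp add: right_diff_distrib')
  qed
  also have "\<dots> = (q ^ r * K) * (q ^ b - 1) + (q ^ r - 1)"
    unfolding K by (simp add: mult_ac)
  finally have "gcd (q ^ a - 1) (q ^ b - 1) = gcd (q ^ b - 1) ((q ^ r * K) * (q ^ b - 1) + (q ^ r - 1))"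
    by (simp only: gcd.commute)
  also have "\<dots> = gcd (q ^ b - 1) (q ^ r - 1)" by (rule gcd_add_mult)
  also have "\<dots> = q ^ gcd a b - 1" using step by (simp add: r_def gcd_red_nat[symmetric])
  finally show ?case .
qed simp

lemma coprime_power_minus_one:
  fixes q :: nat
  assumes "q > 0" "n > 0"
  shows "coprime q (q ^ n - 1)"
proof (rule coprimeI)
  fix c assume c: "c dvd q" "c dvd q ^ n - 1"
  then have "c dvd q ^ n" using assms(2) dvd_power dvd_trans by blast
  then have "c dvd q ^ n - (q ^ n - 1)" using c(2) by (rule dvd_diff_nat)
  then show "is_unit c" using assms(1) by simp
qed

lemma nat_gcd_int_diff:
  "nat (gcd (int n) (gcd (int k) (int d - int h))) = gcd n (gcd k (nat \<bar>int d - int h\<bar>))"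
proof -
  have "int (nat \<bar>int d - int h\<bar>) = \<bar>int d - int h\<bar>" by simp
  then have "gcd (int k) (int d - int h) = gcd (int k) (int (nat \<bar>int d - int h\<bar>))"
    by (simp only: gcd_abs2_int)
  then show ?thesis by (simp only: gcd_int_int_eq nat_int)
qed

lemma sum_prod_lt_square_minus_two:
  fixes a b s x y :: real
  assumes "a \<ge> 2" and "b \<ge> 2" and "a * b \<le> s"
    and "0 \<le> x" "x \<le> a - 2" and "0 \<le> y" "y \<le> b - 2"
  shows "x + y + x * y * s < s * s - 2"
proof -
  have "2 * 2 \<le> a * b" using assms(1,2) by (intro mult_mono) auto
  then have s: "s \<ge> 4" using assms(3) by linarith
  have "x * y * s \<le> (a - 2) * (b - 2) * s"
    using assms(4-7) s by (intro mult_right_mono mult_mono) auto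
  moreover have "a * b * s \<le> s * s" using assms(3) s by (intro mult_right_mono) auto
  then have "(a - 2) * (b - 2) * s \<le> s * s - s * (2 * a + 2 * b - 4)"
    by (simp add: algebra_simps)
  moreover have "s * (2 * a + 2 * b - 4) \<ge> 4 * (2 * a + 2 * b - 4)"
    using s assms(1,2) by (intro mult_right_mono) auto
  ultimately show ?thesis
    using assms(1,2,5,7) by (smt (verit))
qed

lemma span1_scale:
  fixes t a b :: "'a::field"
  assumes "t \<noteq> 0"
  shows "span1 (t * a, t * b) = span1 (a, b)"
proof (intro subset_antisym subsetI)
  fix p assume "p \<in> span1 (t * a, t * b)"
  then obtain c where "p = (c * (t * a), c * (t * b))" by (auto simp: span1_def)
  then have "p = ((c * t) * a, (c * t) * b)" by (simp add: mult.assoc)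
  then show "p \<in> span1 (a, b)" unfolding span1_def by (intro CollectI exI[of _ "c * t"]) simp
next
  fix p assume "p \<in> span1 (a, b)"
  then obtain c where "p = (c * a, c * b)" by (auto simp: span1_def)
  then have "p = ((c / t) * (t * a), (c / t) * (t * b))" using assms by simp
  then show "p \<in> span1 (t * a, t * b)" unfolding span1_def by (intro CollectI exI[of _ "c / t"]) simp
qed

lemma span1_eq_iff:
  fixes a b c e :: "'a::field"
  assumes "a \<noteq> 0" and "c \<noteq> 0"
  shows "span1 (a, b) = span1 (c, e) \<longleftrightarrow> b / a = e / c"
proof -
  have normal: "span1 (x, y) = span1 (1, y / x)" if "x \<noteq> 0" for x y :: 'a
    using span1_scale[of x 1 "y / x"] that by simp
  have "span1 (1, u) = span1 (1, v) \<longleftrightarrow> u = v" for u v :: 'a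
  proof
    assume "span1 (1, u) = span1 (1, v)"
    moreover have "(1, v) \<in> span1 (1, v)" unfolding span1_def by (auto intro: exI[of _ 1])
    ultimately have "(1, v) \<in> span1 (1, u)" by simp
    then show "u = v" by (auto simp: span1_def)
  qed simp
  then show ?thesis unfolding normal[OF assms(1)] normal[OF assms(2)] .
qed

lemma Lset_inter_sigmaL_iff:
  fixes g f r :: "'a::field \<Rightarrow> 'a"
  assumes "\<And>y. y \<noteq> 0 \<Longrightarrow> f y \<noteq> 0" and "\<And>x. g x = x * r x"
  shows "Lset g \<inter> sigmaL q h f \<noteq> {} \<longleftrightarrow> (\<exists>x y. x \<noteq> 0 \<and> y \<noteq> 0 \<and> r x = y ^ q ^ h / f y)"
proof -
  have "Lset g \<inter> sigmaL q h f \<noteq> {} \<longleftrightarrow>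
      (\<exists>x y. x \<noteq> 0 \<and> y \<noteq> 0 \<and> span1 (x, g x) = span1 (f y, y ^ q ^ h))"
    unfolding Lset_def sigmaL_def by blast
  moreover have "span1 (x, g x) = span1 (f y, y ^ q ^ h) \<longleftrightarrow> r x = y ^ q ^ h / f y"
    if "x \<noteq> 0" "y \<noteq> 0" for x y
    using span1_eq_iff[OF that(1) assms(1)[OF that(2)]] that(1) by (simp add: assms(2))
  ultimately show ?thesis by blast
qed

lemma power_plus_linear_factor:
  fixes \<alpha> \<beta> x :: "'a::comm_ring_1"
  assumes "p > 0"
  shows "\<alpha> * x ^ p + \<beta> * x = x * (\<alpha> * x ^ (p - 1) + \<beta>)"
  using power_minus_mult[OF assms, of x] by (simp add: algebra_simps)

lemma Lset_inter_sigmaL_monomial_iff: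
  fixes \<alpha> \<beta> c :: "'a::field"
  assumes "c \<noteq> 0" and "q > 0"
  shows "Lset (\<lambda>x. \<alpha> * x ^ (q ^ k) + \<beta> * x) \<inter> sigmaL q h (\<lambda>y. c * y ^ (q ^ d)) \<noteq> {} \<longleftrightarrow>
    (\<exists>x y. x \<noteq> 0 \<and> y \<noteq> 0 \<and> \<alpha> * x ^ (q ^ k - 1) + \<beta> = y ^ q ^ h / (c * y ^ q ^ d))"
proof (rule Lset_inter_sigmaL_iff[where r = "\<lambda>x. \<alpha> * x ^ (q ^ k - 1) + \<beta>"])
  show "c * y ^ q ^ d \<noteq> 0" if "y \<noteq> 0" for y :: 'a
    using assms(1) that by simp
  show "\<alpha> * x ^ q ^ k + \<beta> * x = x * (\<alpha> * x ^ (q ^ k - 1) + \<beta>)" for x :: 'a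
    using assms(2) by (simp add: power_plus_linear_factor)
qed

lemma affine_quotient_eq_iff:
  fixes \<alpha> \<beta> c u v w :: "'a::field"
  assumes "\<alpha> \<noteq> 0" and "c \<noteq> 0" and "v \<noteq> 0" and "w \<noteq> 0" and "v = w \<or> \<beta> = 0"
  shows "\<alpha> * u + \<beta> = v / (c * w) \<longleftrightarrow> u * (w / v) = (1 - \<beta> * c) / (\<alpha> * c)"
  using assms by (auto simp: field_simps)

lemma bij_betw_moebius:
  fixes t :: "'a::field"
  assumes "t \<noteq> 1"
  shows "bij_betw (\<lambda>y. (1 - y * t) / (1 - y)) (UNIV - {1}) (UNIV - {t})"
proof (rule bij_betw_byWitness[where f' = "\<lambda>w. (1 - w) / (t - w)"])
  show "\<forall>y\<in>UNIV - {1}. (1 - (1 - y * t) / (1 - y)) / (t - (1 - y * t) / (1 - y)) = y"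
  proof
    fix y :: 'a assume "y \<in> UNIV - {1}"
    then have y: "1 - y \<noteq> 0" by simp
    have "1 - (1 - y * t) / (1 - y) = y * (t - 1) / (1 - y)"
      "t - (1 - y * t) / (1 - y) = (t - 1) / (1 - y)"
      using y by (simp_all add: field_simps)
    then show "(1 - (1 - y * t) / (1 - y)) / (t - (1 - y * t) / (1 - y)) = y" using y assms by simp
  qed
  show "\<forall>w\<in>UNIV - {t}. (1 - (1 - w) / (t - w) * t) / (1 - (1 - w) / (t - w)) = w"
  proof
    fix w :: 'a assume "w \<in> UNIV - {t}"
    then have w: "t - w \<noteq> 0" by simp
    have "1 - (1 - w) / (t - w) * t = w * (t - 1) / (t - w)"
      "1 - (1 - w) / (t - w) = (t - 1) / (t - w)"
      using w by (simp_all add: field_simps)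
    then show "(1 - (1 - w) / (t - w) * t) / (1 - (1 - w) / (t - w)) = w" using w assms by simp
  qed
  show "(\<lambda>y. (1 - y * t) / (1 - y)) ` (UNIV - {1}) \<subseteq> UNIV - {t}"
    using assms by (auto simp: field_simps)
  show "(\<lambda>w. (1 - w) / (t - w)) ` (UNIV - {t}) \<subseteq> UNIV - {1}"
    using assms by (auto simp: field_simps)
qed

lemma sum_UNIV_one_minus:
  fixes f :: "'a::ring_1 \<Rightarrow> 'b::comm_monoid_add"
  shows "(\<Sum>z\<in>UNIV. f (1 - z)) = (\<Sum>z\<in>UNIV. f z)"
  by (rule sum.reindex_bij_witness[where i="\<lambda>z. 1 - z" and j="\<lambda>z. 1 - z"]) auto

locale finite_field_generator =
  fixes g :: "'a::{finite,field}"
  assumes generator_nonzero: "g \<noteq> 0"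
    and generates: "z \<noteq> 0 \<Longrightarrow> \<exists>i. z = g ^ i"

lemma ring_of_type_algebra_pow:
  "x [^]\<^bsub>ring_of_type_algebra\<^esub> (n::nat) = (x::'a::field) ^ n"
  by (induction n) (simp_all add: ring_of_type_algebra_def nat_pow_def)

lemma finite_field_generator_exists: "\<exists>g::'a::{finite,field}. finite_field_generator g"
proof -
  interpret R: field "ring_of_type_algebra :: 'a ring" by rule
  \<comment> \<open>qualified: \<open>Ring_Divisibility\<close>, imported with \<open>Algebraic_Closure_Type\<close>, has another \<open>mult_of\<close>\<close>
  have fin: "finite (carrier (ring_of_type_algebra :: 'a ring))" by simp
  obtain g where g: "g \<in> carrier (Multiplicative_Group.mult_of (ring_of_type_algebra :: 'a ring))"
    and gen: "carrier (Multiplicative_Group.mult_of (ring_of_type_algebra :: 'a ring)) =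
      {g [^]\<^bsub>ring_of_type_algebra\<^esub> i | i::nat. i \<in> UNIV}"
    using R.finite_field_mult_group_has_gen[OF fin] by (elim bexE) (rule that)
  have carrier: "carrier (Multiplicative_Group.mult_of (ring_of_type_algebra :: 'a ring)) = UNIV - {0}"
    by (simp add: ring_of_type_algebra_def)
  show ?thesis
  proof (intro exI[of _ g] finite_field_generator.intro)
    show "g \<noteq> 0" using g carrier by blast
    fix z :: 'a assume "z \<noteq> 0"
    then show "\<exists>i. z = g ^ i" using gen carrier by (auto simp: ring_of_type_algebra_pow)
  qed
qed

context finite_field_generator
begin

definition units_card :: nat where
  "units_card = CARD('a) - 1"

lemma card_nonzero: "card (UNIV - {0::'a}) = units_card"
  by (simp add: units_card_def card_Diff_subset)

lemma card_ge_two: "CARD('a) \<ge> 2"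
proof -
  have "card {0::'a, 1} \<le> CARD('a)" by (rule card_mono) auto
  then show ?thesis by simp
qed

lemma units_card_pos: "units_card > 0"
  using card_ge_two by (simp add: units_card_def)

lemma power_units_card:
  fixes z :: 'a
  assumes "z \<noteq> 0"
  shows "z ^ units_card = 1"
proof -
  have "(\<Prod>x\<in>UNIV - {0::'a}. z * x) = (\<Prod>x\<in>UNIV - {0}. x)"
    by (rule prod.reindex_bij_witness[where i="\<lambda>x. x / z" and j="\<lambda>x. z * x"]) (use assms in auto)
  then show ?thesis by (simp add: prod.distrib card_nonzero)
qed

lemma generator_power_mod: "g ^ i = g ^ (i mod units_card)"
  using power_mod_of_power_eq_one[OF power_units_card[OF generator_nonzero]] .

lemma bij_betw_generator_power: "bij_betw (\<lambda>i. g ^ i) {..<units_card} (UNIV - {0})"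
proof -
  have "(\<lambda>i. g ^ i) ` {..<units_card} = UNIV - {0}"
  proof
    show "(\<lambda>i. g ^ i) ` {..<units_card} \<subseteq> UNIV - {0}"
      using generator_nonzero by auto
    show "UNIV - {0} \<subseteq> (\<lambda>i. g ^ i) ` {..<units_card}"
    proof
      fix z :: 'a assume "z \<in> UNIV - {0}"
      then obtain i where "z = g ^ (i mod units_card)"
        using generates generator_power_mod by blast
      then show "z \<in> (\<lambda>i. g ^ i) ` {..<units_card}" using units_card_pos by auto
    qed
  qed
  then show ?thesis using card_nonzero by (simp add: bij_betw_def eq_card_imp_inj_on)
qed

lemma generator_power_eq_iff: "g ^ i = g ^ j \<longleftrightarrow> i mod units_card = j mod units_card"
proof -
  have "inj_on (\<lambda>i. g ^ i) {..<units_card}"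
    using bij_betw_generator_power by (rule bij_betw_imp_inj_on)
  moreover have "i mod units_card \<in> {..<units_card}" "j mod units_card \<in> {..<units_card}"
    using units_card_pos by simp_all
  ultimately show ?thesis
    by (subst (1 2) generator_power_mod) (rule inj_on_eq_iff)
qed

lemma generator_power_eq_one_iff: "g ^ i = 1 \<longleftrightarrow> units_card dvd i"
  using generator_power_eq_iff[of i 0] by (simp add: dvd_eq_mod_eq_0)

definition dlog :: "'a \<Rightarrow> nat" where
  "dlog = inv_into {..<units_card} (\<lambda>i. g ^ i)"

lemma generator_power_dlog: "(z::'a) \<noteq> 0 \<Longrightarrow> g ^ dlog z = z"
  unfolding dlog_def using bij_betw_generator_power by (simp add: bij_betw_inv_into_right)

lemma dlog_generator_power: "dlog (g ^ i) = i mod units_card"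
proof -
  have "dlog (g ^ i) = dlog (g ^ (i mod units_card))" by (simp flip: generator_power_mod)
  also have "\<dots> = i mod units_card"
    unfolding dlog_def using bij_betw_generator_power units_card_pos
    by (simp add: bij_betw_inv_into_left)
  finally show ?thesis .
qed

lemma sum_UNIV_eq_zero_plus_generator_powers: "(\<Sum>z\<in>UNIV. f z) = f 0 + (\<Sum>i<units_card. f (g ^ i))"
  using sum.remove[of UNIV 0 f] sum.reindex_bij_betw[OF bij_betw_generator_power, of f] by simp

lemma exists_power_product_iff:
  fixes z :: 'a
  shows "(\<exists>x y. x \<noteq> 0 \<and> y \<noteq> 0 \<and> x ^ A * y ^ B = z) \<longleftrightarrow>
     z \<noteq> 0 \<and> gcd A (gcd B units_card) dvd dlog z"
proof
  assume "\<exists>x y. x \<noteq> 0 \<and> y \<noteq> 0 \<and> x ^ A * y ^ B = z"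
  then obtain x y where xy: "x \<noteq> 0" "y \<noteq> 0" "x ^ A * y ^ B = z" by blast
  then have "z = g ^ (dlog x * A + dlog y * B)"
    by (simp add: power_add power_mult generator_power_dlog)
  then have "dlog z = (dlog x * A + dlog y * B) mod units_card"
    by (simp add: dlog_generator_power)
  moreover have "gcd A (gcd B units_card) dvd A" "gcd A (gcd B units_card) dvd B"
    "gcd A (gcd B units_card) dvd units_card"
    using dvd_trans[OF gcd_dvd2 gcd_dvd1] dvd_trans[OF gcd_dvd2 gcd_dvd2] by auto
  ultimately have "gcd A (gcd B units_card) dvd dlog z"
    by (simp add: dvd_mod_iff)
  then show "z \<noteq> 0 \<and> gcd A (gcd B units_card) dvd dlog z"
    using xy(1,2) xy(3)[symmetric] by simp
next
  assume z: "z \<noteq> 0 \<and> gcd A (gcd B units_card) dvd dlog z"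
  then obtain c where c: "dlog z = gcd A (gcd B units_card) * c" by blast
  obtain u v :: int where uv: "u * B + v * units_card = gcd (int B) (int units_card)"
    using bezout_int by blast
  obtain u' v' :: int where
    uv': "u' * A + v' * gcd (int B) (int units_card) = gcd (int A) (gcd (int B) (int units_card))"
    using bezout_int by blast
  define a where "a = nat ((u' * int c) mod units_card)"
  define b where "b = nat ((v' * u * int c) mod units_card)"
  have "int (gcd A (gcd B units_card)) = u' * A + v' * (u * B + v * units_card)"
    using uv uv' by (simp add: gcd_int_int_eq)
  then have "int (dlog z) = u' * c * A + v' * u * c * B + (v' * v * c) * units_card"
    unfolding c of_nat_mult by (simp add: algebra_simps)
  then have "int (dlog z) mod units_card = (u' * c * A + v' * u * c * B) mod units_card"
    by simp
  also have "\<dots> = ((u' * c) mod units_card * A + (v' * u * c) mod units_card * B) mod units_card"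
    by (rule mod_add_cong) (simp_all add: mod_mult_left_eq)
  also have "\<dots> = int (a * A + b * B) mod units_card"
    using units_card_pos by (simp add: a_def b_def)
  finally have "int ((a * A + b * B) mod units_card) = int (dlog z mod units_card)"
    by (simp add: of_nat_mod)
  then have "g ^ (a * A + b * B) = g ^ dlog z"
    unfolding generator_power_eq_iff by simp
  then have "(g ^ a) ^ A * (g ^ b) ^ B = z"
    using z generator_power_dlog by (simp add: power_add power_mult)
  then show "\<exists>x y. x \<noteq> 0 \<and> y \<noteq> 0 \<and> x ^ A * y ^ B = z"
    using generator_nonzero by (intro exI[of _ "g ^ a"] exI[of _ "g ^ b"]) simp
qed

lemma exists_power_iff:
  fixes z :: 'a
  shows "(\<exists>x. x \<noteq> 0 \<and> x ^ A = z) \<longleftrightarrow> z \<noteq> 0 \<and> gcd A units_card dvd dlog z"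
  using exists_power_product_iff[of A 0 z] by auto

lemma exists_power_gcd_iff:
  fixes z :: 'a
  shows "(\<exists>x. x \<noteq> 0 \<and> x ^ gcd A units_card = z) \<longleftrightarrow> (\<exists>x. x \<noteq> 0 \<and> x ^ A = z)"
  using exists_power_iff[of "gcd A units_card" z] exists_power_iff[of A z] by (simp add: gcd.right_idem)

lemma power_cofactor_eq_one_iff:
  fixes z :: 'a
  assumes "D * T = units_card"
  shows "z ^ T = 1 \<longleftrightarrow> z \<noteq> 0 \<and> D dvd dlog z"
proof -
  have "T > 0" using assms units_card_pos by (cases "T = 0") auto
  show ?thesis
  proof (cases "z = 0")
    case False
    then have "z ^ T = g ^ (dlog z * T)"
      by (simp add: power_mult generator_power_dlog)
    then show ?thesis
      using \<open>T > 0\<close> False by (simp add: generator_power_eq_one_iff flip: assms)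
  qed (use \<open>T > 0\<close> in \<open>simp add: zero_power\<close>)
qed

lemma card_base_ge_two:
  assumes "CARD('a) = q ^ n"
  shows "q \<ge> 2"
proof (rule ccontr)
  assume "\<not> q \<ge> 2"
  then have "q = 0 \<or> q = 1" by auto
  then have "q ^ n \<le> 1" by (auto simp: power_0_left)
  then show False using card_ge_two assms by simp
qed

lemma exists_root_of_coprime:
  fixes w :: 'a
  assumes "coprime p units_card" and "w \<noteq> 0"
  shows "\<exists>y. y \<noteq> 0 \<and> y ^ p = w"
  using assms by (simp add: exists_power_iff coprime_iff_gcd_eq_1)

lemma exists_frobenius_quotient_iff_le:
  fixes v :: 'a
  assumes "q > 0" and "coprime q units_card" and "h \<le> d"
  shows "(\<exists>y. y \<noteq> 0 \<and> y ^ q ^ d / y ^ q ^ h = v) \<longleftrightarrow> (\<exists>w. w \<noteq> 0 \<and> w ^ (q ^ (d - h) - 1) = v)"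
proof -
  have quotient: "y ^ q ^ d / y ^ q ^ h = (y ^ q ^ h) ^ (q ^ (d - h) - 1)" if "y \<noteq> 0" for y :: 'a
  proof -
    have "(y ^ q ^ h) ^ (q ^ (d - h) - 1) * y ^ q ^ h = (y ^ q ^ h) ^ q ^ (d - h)"
      using assms(1) power_minus_mult[of "q ^ (d - h)" "y ^ q ^ h"] by simp
    also have "\<dots> = y ^ q ^ d"
      using assms(3) by (simp flip: power_mult power_add)
    finally show ?thesis using that by (simp add: field_simps)
  qed
  show ?thesis
  proof
    assume "\<exists>y. y \<noteq> 0 \<and> y ^ q ^ d / y ^ q ^ h = v"
    then obtain y where "y \<noteq> 0" "y ^ q ^ d / y ^ q ^ h = v" by blast
    then show "\<exists>w. w \<noteq> 0 \<and> w ^ (q ^ (d - h) - 1) = v"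
      using quotient by (intro exI[of _ "y ^ q ^ h"]) simp
  next
    assume "\<exists>w. w \<noteq> 0 \<and> w ^ (q ^ (d - h) - 1) = v"
    then obtain w where w: "w \<noteq> 0" "w ^ (q ^ (d - h) - 1) = v" by blast
    obtain y where y: "y \<noteq> 0" "y ^ q ^ h = w"
      using exists_root_of_coprime[of "q ^ h"] assms(2) w(1) by auto
    then have "y ^ q ^ d / y ^ q ^ h = v" using quotient[OF y(1)] w(2) by simp
    then show "\<exists>y. y \<noteq> 0 \<and> y ^ q ^ d / y ^ q ^ h = v" using y(1) by blast
  qed
qed

lemma exists_frobenius_quotient_iff:
  fixes v :: 'a
  assumes "q > 0" and "coprime q units_card"
  shows "(\<exists>y. y \<noteq> 0 \<and> y ^ q ^ d / y ^ q ^ h = v) \<longleftrightarrow>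
    (\<exists>w. w \<noteq> 0 \<and> w ^ (q ^ nat \<bar>int d - int h\<bar> - 1) = v)"
proof (cases "h \<le> d")
  case True
  then have "nat \<bar>int d - int h\<bar> = d - h" by simp
  then show ?thesis using exists_frobenius_quotient_iff_le[OF assms True] by presburger
next
  case False
  have "(\<exists>y. y \<noteq> 0 \<and> y ^ q ^ d / y ^ q ^ h = v) \<longleftrightarrow>
      (\<exists>y. y \<noteq> 0 \<and> y ^ q ^ h / y ^ q ^ d = inverse v)"
    by (metis inverse_divide inverse_inverse_eq)
  also have "\<dots> \<longleftrightarrow> (\<exists>w. w \<noteq> 0 \<and> w ^ (q ^ (h - d) - 1) = inverse v)"
    using exists_frobenius_quotient_iff_le[OF assms] False by simp
  also have "\<dots> \<longleftrightarrow> (\<exists>w. w \<noteq> 0 \<and> w ^ (q ^ (h - d) - 1) = v)"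
  proof
    assume "\<exists>w. w \<noteq> 0 \<and> w ^ (q ^ (h - d) - 1) = inverse v"
    then obtain w where "w \<noteq> 0" "w ^ (q ^ (h - d) - 1) = inverse v" by blast
    then show "\<exists>w. w \<noteq> 0 \<and> w ^ (q ^ (h - d) - 1) = v"
      by (intro exI[of _ "inverse w"]) (simp add: power_inverse)
  next
    assume "\<exists>w. w \<noteq> 0 \<and> w ^ (q ^ (h - d) - 1) = v"
    then obtain w where "w \<noteq> 0" "w ^ (q ^ (h - d) - 1) = v" by blast
    then show "\<exists>w. w \<noteq> 0 \<and> w ^ (q ^ (h - d) - 1) = inverse v"
      by (intro exI[of _ "inverse w"]) (simp add: power_inverse)
  qed
  moreover have "nat \<bar>int d - int h\<bar> = h - d" using False by simp
  ultimately show ?thesis by presburger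
qed

lemma exists_power_times_frobenius_quotient_iff:
  fixes z :: 'a
  assumes "q > 0" and "coprime q units_card"
  shows "(\<exists>x y. x \<noteq> 0 \<and> y \<noteq> 0 \<and> x ^ A * (y ^ q ^ d / y ^ q ^ h) = z) \<longleftrightarrow>
    (\<exists>x w. x \<noteq> 0 \<and> w \<noteq> 0 \<and> x ^ A * w ^ (q ^ nat \<bar>int d - int h\<bar> - 1) = z)"
    (is "?lhs \<longleftrightarrow> ?rhs")
proof
  assume ?lhs
  then obtain x y where "x \<noteq> 0" "y \<noteq> 0" "x ^ A * (y ^ q ^ d / y ^ q ^ h) = z" by blast
  moreover obtain w where "w \<noteq> 0" "w ^ (q ^ nat \<bar>int d - int h\<bar> - 1) = y ^ q ^ d / y ^ q ^ h"
    using exists_frobenius_quotient_iff[OF assms] \<open>y \<noteq> 0\<close> by blast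
  ultimately show ?rhs by (intro exI[of _ x] exI[of _ w]) simp
next
  assume ?rhs
  then obtain x w where "x \<noteq> 0" "w \<noteq> 0" "x ^ A * w ^ (q ^ nat \<bar>int d - int h\<bar> - 1) = z" by blast
  moreover obtain y where "y \<noteq> 0" "y ^ q ^ d / y ^ q ^ h = w ^ (q ^ nat \<bar>int d - int h\<bar> - 1)"
    using exists_frobenius_quotient_iff[OF assms] \<open>w \<noteq> 0\<close> by blast
  ultimately show ?lhs by (intro exI[of _ x] exI[of _ y]) simp
qed

lemma exists_power_times_frobenius_quotient_iff_norm:
  fixes z :: 'a
  assumes card: "CARD('a) = q ^ n" and "n > 0"
  shows "(\<exists>x y. x \<noteq> 0 \<and> y \<noteq> 0 \<and> x ^ (q ^ k - 1) * (y ^ q ^ d / y ^ q ^ h) = z) \<longleftrightarrow>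
    z ^ ((q ^ n - 1) div (q ^ gcd n (gcd k (nat \<bar>int d - int h\<bar>)) - 1)) = 1"
proof -
  define s e where "s = nat \<bar>int d - int h\<bar>" and "e = gcd n (gcd k s)"
  have q: "q \<ge> 2" using card by (rule card_base_ge_two)
  have M: "units_card = q ^ n - 1" by (simp add: units_card_def card)
  have "coprime q units_card"
    unfolding M using q assms(2) coprime_power_minus_one[of q n] by simp
  then have "(\<exists>x y. x \<noteq> 0 \<and> y \<noteq> 0 \<and> x ^ (q ^ k - 1) * (y ^ q ^ d / y ^ q ^ h) = z) \<longleftrightarrow>
      (\<exists>x w. x \<noteq> 0 \<and> w \<noteq> 0 \<and> x ^ (q ^ k - 1) * w ^ (q ^ s - 1) = z)"
    unfolding s_def using q by (intro exists_power_times_frobenius_quotient_iff) simp_all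
  also have "\<dots> \<longleftrightarrow> z \<noteq> 0 \<and> gcd (q ^ k - 1) (gcd (q ^ s - 1) units_card) dvd dlog z"
    by (rule exists_power_product_iff)
  also have "gcd (q ^ k - 1) (gcd (q ^ s - 1) units_card) = q ^ e - 1"
  proof -
    have "q > 0" using q by simp
    then have "gcd (q ^ k - 1) (gcd (q ^ s - 1) (q ^ n - 1)) = q ^ gcd k (gcd s n) - 1"
      by (simp only: gcd_power_minus_one)
    then show ?thesis unfolding M e_def by (simp add: ac_simps)
  qed
  also have "z \<noteq> 0 \<and> q ^ e - 1 dvd dlog z \<longleftrightarrow> z ^ (units_card div (q ^ e - 1)) = 1"
  proof (rule power_cofactor_eq_one_iff[symmetric])
    obtain t where "n = e * t" unfolding e_def by (metis dvdE gcd_dvd1)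
    then have "q ^ e - 1 dvd units_card"
      unfolding M using q power_minus_one_dvd_power_mult_minus_one[of q e t] by simp
    then show "(q ^ e - 1) * (units_card div (q ^ e - 1)) = units_card" by simp
  qed
  finally show ?thesis unfolding M s_def e_def .
qed

definition unity_root :: complex where
  "unity_root = cis (2 * pi / units_card)"

lemma unity_root_power: "unity_root ^ i = cis (2 * pi * real i / units_card)"
  by (simp add: unity_root_def DeMoivre mult_ac)

lemma unity_root_power_units_card: "unity_root ^ units_card = 1"
  using units_card_pos by (simp add: unity_root_power)

lemma unity_root_power_mod: "unity_root ^ i = unity_root ^ (i mod units_card)"
  using power_mod_of_power_eq_one[OF unity_root_power_units_card] .

lemma unity_root_power_eq_one_iff: "unity_root ^ i = 1 \<longleftrightarrow> units_card dvd i"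
proof -
  have "inj_on (\<lambda>k. cis (2 * pi * real k / real units_card)) {..<units_card}"
    using bij_betw_roots_unity[OF units_card_pos] by (rule bij_betw_imp_inj_on)
  then have "unity_root ^ (i mod units_card) = unity_root ^ 0 \<longleftrightarrow> i mod units_card = 0"
    unfolding unity_root_power using units_card_pos by (intro inj_on_eq_iff) auto
  then show ?thesis by (simp add: dvd_eq_mod_eq_0 flip: unity_root_power_mod)
qed

lemma norm_unity_root: "norm unity_root = 1"
  by (simp add: unity_root_def)

text \<open>For \<open>j < units_card\<close> these are all the multiplicative characters of the field,
  extended by \<open>0\<close> at \<open>0\<close>.\<close>

definition character :: "nat \<Rightarrow> 'a \<Rightarrow> complex" where
  "character j z = (if z = 0 then 0 else unity_root ^ (j * dlog z))"

lemma character_zero [simp]: "character j 0 = 0"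
  by (simp add: character_def)

lemma character_generator_power: "character j (g ^ i) = unity_root ^ (j * i)"
proof -
  have "unity_root ^ (j * (i mod units_card)) = unity_root ^ (j * i)"
    by (subst (1 2) unity_root_power_mod) (simp add: mod_mult_right_eq)
  then show ?thesis using generator_nonzero by (simp add: character_def dlog_generator_power)
qed

lemma character_mult: "character j (x * y) = character j x * character j y"
proof (cases "x = 0 \<or> y = 0")
  case True
  then show ?thesis by auto
next
  case False
  then have "character j (x * y) = character j (g ^ (dlog x + dlog y))"
    by (simp add: power_add generator_power_dlog)
  also have "\<dots> = unity_root ^ (j * dlog x) * unity_root ^ (j * dlog y)"
    by (simp only: character_generator_power) (simp add: distrib_left power_add)
  also have "\<dots> = character j x * character j y"
    using False by (simp add: character_def)
  finally show ?thesis .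
qed

lemma character_index_add: "character (i + j) z = character i z * character j z"
  by (simp add: character_def distrib_right power_add)

lemma character_one [simp]: "character j 1 = 1"
  using character_generator_power[of j 0] by simp

lemma character_zero_index: "character 0 z = (if z = 0 then 0 else 1)"
  by (simp add: character_def)

lemma norm_character: "z \<noteq> 0 \<Longrightarrow> norm (character j z) = 1"
  by (simp add: character_def norm_power norm_unity_root)

lemma character_inverse: "character j (inverse z) = cnj (character j z)"
proof (cases "z = 0")
  case False
  have "character j (inverse z) * character j z = 1"
    using False by (simp flip: character_mult)
  moreover have "cnj (character j z) * character j z = 1"
    using complex_norm_square[of "character j z"] norm_character[OF False] by (simp add: mult.commute)
  ultimately show ?thesis by (metis mult_cancel_right mult_zero_right zero_neq_one)
qed simp

lemma sum_character:
  "(\<Sum>z\<in>UNIV. character j z) = (if units_card dvd j then of_nat units_card else 0)"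
proof -
  have "(\<Sum>z\<in>UNIV. character j z) = (\<Sum>i<units_card. (unity_root ^ j) ^ i)"
    by (simp add: sum_UNIV_eq_zero_plus_generator_powers character_generator_power power_mult)
  also have "\<dots> = (if units_card dvd j then of_nat units_card else 0)"
  proof (cases "units_card dvd j")
    case False
    have "(unity_root ^ j) ^ units_card = 1"
      by (simp add: unity_root_power_eq_one_iff flip: power_mult)
    then show ?thesis using False sum_gp_strict[of "unity_root ^ j" units_card]
      by (simp add: unity_root_power_eq_one_iff)
  next
    case True
    then have "unity_root ^ j = 1" by (simp add: unity_root_power_eq_one_iff)
    then show ?thesis using True by simp
  qed
  finally show ?thesis .
qed

lemma sum_character_power_indicator:
  assumes "m dvd units_card"
  shows "(\<Sum>t<m. character (t * (units_card div m)) z) =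
    (if z \<noteq> 0 \<and> m dvd dlog z then of_nat m else 0)"
proof (cases "z = 0")
  case False
  define r where "r = units_card div m"
  have Mr: "units_card = m * r" using assms by (simp add: r_def)
  then have "r > 0" using units_card_pos by (cases "r = 0") auto
  define w where "w = unity_root ^ (r * dlog z)"
  have "(\<Sum>t<m. character (t * r) z) = (\<Sum>t<m. w ^ t)"
    using False by (simp add: character_def w_def mult_ac flip: power_mult)
  moreover have "w = 1 \<longleftrightarrow> m dvd dlog z"
    using \<open>r > 0\<close> by (simp add: w_def unity_root_power_eq_one_iff Mr mult.commute[of m])
  moreover have "w ^ m = 1"
  proof -
    have "w ^ m = unity_root ^ (r * dlog z * m)" by (simp add: w_def power_mult)
    also have "r * dlog z * m = units_card * dlog z" by (simp add: Mr mult_ac)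
    finally show ?thesis by (simp add: unity_root_power_eq_one_iff)
  qed
  ultimately show ?thesis using sum_gp_strict[of w m] False by (simp add: r_def)
qed simp

definition jacobi_sum :: "nat \<Rightarrow> nat \<Rightarrow> complex" where
  "jacobi_sum a b = (\<Sum>z\<in>UNIV. character a z * character b (1 - z))"

lemma jacobi_sum_commute: "jacobi_sum a b = jacobi_sum b a"
  unfolding jacobi_sum_def
  using sum_UNIV_one_minus[of "\<lambda>z. character a z * character b (1 - z)"] by (simp add: mult.commute)

lemma jacobi_sum_zero_left:
  assumes "\<not> units_card dvd b"
  shows "jacobi_sum 0 b = -1"
proof -
  have "character 0 z * character b (1 - z) = character b (1 - z) - (if z = 0 then 1 else 0)" for z
    by (simp add: character_zero_index)
  then have "jacobi_sum 0 b = (\<Sum>z\<in>UNIV. character b (1 - z)) - 1"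
    by (simp add: jacobi_sum_def sum_subtractf)
  then show ?thesis using assms by (simp add: sum_UNIV_one_minus sum_character)
qed

lemma jacobi_sum_zero_right: "\<not> units_card dvd a \<Longrightarrow> jacobi_sum a 0 = -1"
  by (simp add: jacobi_sum_commute jacobi_sum_zero_left)

lemma jacobi_sum_zero_zero: "jacobi_sum 0 0 = of_nat CARD('a) - 2"
proof -
  have "character 0 z * character 0 (1 - z) =
      1 - (if z = 0 then 1 else 0) - (if z = 1 then 1 else 0)" for z :: 'a
    by (simp add: character_zero_index)
  then show ?thesis by (simp add: jacobi_sum_def sum_subtractf)
qed

lemma sum_character_moebius:
  assumes "\<not> units_card dvd b"
  shows "(\<Sum>y\<in>UNIV. character b ((1 - y * t) / (1 - y))) =
    (if t = 1 then of_nat CARD('a) - 1 else - character b t)"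
proof (cases "t = 1")
  case True
  have "character b ((1 - y * 1) / (1 - y)) = 1 - (if y = 1 then 1 else 0)" for y :: 'a
    by simp
  then show ?thesis using True by (simp add: sum_subtractf)
next
  case False
  have "(\<Sum>y\<in>UNIV - {1}. character b ((1 - y * t) / (1 - y))) = (\<Sum>w\<in>UNIV - {t}. character b w)"
    using sum.reindex_bij_betw[OF bij_betw_moebius[OF False]] .
  \<comment> \<open>the term \<open>y = 1\<close> vanishes: there the argument is \<open>(1 - t) / 0 = 0\<close>\<close>
  moreover have "(\<Sum>y\<in>UNIV. character b ((1 - y * t) / (1 - y))) =
      (\<Sum>y\<in>UNIV - {1}. character b ((1 - y * t) / (1 - y)))"
    by (subst sum.remove[of UNIV 1]) simp_all
  moreover have "(\<Sum>w\<in>UNIV. character b w) = character b t + (\<Sum>w\<in>UNIV - {t}. character b w)"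
    by (rule sum.remove) simp_all
  ultimately show ?thesis
    using False assms by (simp add: sum_character eq_neg_iff_add_eq_0 add.commute)
qed

lemma jacobi_sum_mult_cnj_eq_double_sum:
  assumes "\<not> units_card dvd a"
  shows "jacobi_sum a b * cnj (jacobi_sum a b) =
    (\<Sum>t\<in>UNIV. character a t * (\<Sum>y\<in>UNIV. character b ((1 - y * t) / (1 - y))))"
proof -
  \<comment> \<open>substitute \<open>x = y * t\<close>; for \<open>y = 0\<close> both sides vanish as \<open>character a\<close> is nontrivial\<close>
  have substitution: "(\<Sum>x\<in>UNIV. character a (x / y) * character b ((1 - x) / (1 - y))) =
      (\<Sum>t\<in>UNIV. character a t * character b ((1 - y * t) / (1 - y)))" for y :: 'a
  proof (cases "y = 0")
    case True
    then show ?thesis using assms by (simp add: sum_character flip: sum_distrib_right)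
  next
    case False
    show ?thesis
      by (rule sum.reindex_bij_witness[where i="\<lambda>t. y * t" and j="\<lambda>x. x / y"]) (use False in simp_all)
  qed
  have "jacobi_sum a b * cnj (jacobi_sum a b) =
      (\<Sum>x\<in>UNIV. \<Sum>y\<in>UNIV. character a x * character b (1 - x) *
        (character a (inverse y) * character b (inverse (1 - y))))"
    unfolding jacobi_sum_def by (simp add: character_inverse sum_product)
  also have "\<dots> = (\<Sum>y\<in>UNIV. \<Sum>x\<in>UNIV. character a (x / y) * character b ((1 - x) / (1 - y)))"
    by (subst sum.swap) (simp add: divide_inverse character_mult mult_ac)
  also have "\<dots> = (\<Sum>t\<in>UNIV. \<Sum>y\<in>UNIV. character a t * character b ((1 - y * t) / (1 - y)))"
    unfolding substitution by (rule sum.swap)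
  finally show ?thesis by (simp add: sum_distrib_left)
qed

lemma jacobi_sum_mult_cnj:
  assumes "\<not> units_card dvd a" and "\<not> units_card dvd b"
  shows "jacobi_sum a b * cnj (jacobi_sum a b) = of_nat CARD('a) - (\<Sum>t\<in>UNIV. character (a + b) t)"
proof -
  have "character a t * (\<Sum>y\<in>UNIV. character b ((1 - y * t) / (1 - y))) =
      (if t = 1 then of_nat CARD('a) else 0) - character (a + b) t" for t
    using assms(2) by (simp add: sum_character_moebius character_index_add)
  then show ?thesis
    using assms(1) by (simp add: jacobi_sum_mult_cnj_eq_double_sum sum_subtractf)
qed

lemma norm_jacobi_sum_le:
  assumes "\<not> units_card dvd a" and "\<not> units_card dvd b"
  shows "norm (jacobi_sum a b) \<le> sqrt (real CARD('a))"
proof -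
  define c where "c = (if units_card dvd a + b then real units_card else 0)"
  have "complex_of_real ((norm (jacobi_sum a b))\<^sup>2) = complex_of_real (real CARD('a) - c)"
    unfolding complex_norm_square jacobi_sum_mult_cnj[OF assms] by (simp add: sum_character c_def)
  then have "(norm (jacobi_sum a b))\<^sup>2 \<le> real CARD('a)"
    unfolding of_real_eq_iff by (simp add: c_def)
  then show ?thesis by (simp add: real_le_rsqrt)
qed

lemma sum_character_products_eq_jacobi_sums:
  "(\<Sum>a\<in>UNIV. (\<Sum>t<m. character (t * r) (a / c1)) * (\<Sum>u<l. character (u * r') ((1 - a) / c2))) =
    (\<Sum>t<m. \<Sum>u<l. character (t * r) (inverse c1) * character (u * r') (inverse c2) *
      jacobi_sum (t * r) (u * r'))"
proof -
  have "(\<Sum>a\<in>UNIV. (\<Sum>t<m. character (t * r) (a / c1)) * (\<Sum>u<l. character (u * r') ((1 - a) / c2))) =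
      (\<Sum>a\<in>UNIV. \<Sum>t<m. \<Sum>u<l. character (t * r) (inverse c1) * character (u * r') (inverse c2) *
        (character (t * r) a * character (u * r') (1 - a)))"
    by (simp add: sum_product divide_inverse character_mult mult_ac)
  also have "\<dots> = (\<Sum>t<m. \<Sum>u<l. \<Sum>a\<in>UNIV. character (t * r) (inverse c1) *
      character (u * r') (inverse c2) * (character (t * r) a * character (u * r') (1 - a)))"
    by (subst sum.swap, rule sum.cong[OF refl], rule sum.swap)
  also have "\<dots> = (\<Sum>t<m. \<Sum>u<l. character (t * r) (inverse c1) * character (u * r') (inverse c2) *
      jacobi_sum (t * r) (u * r'))"
    by (simp add: jacobi_sum_def sum_distrib_left)
  finally show ?thesis .
qed

lemma not_dvd_multiple_below:
  assumes "m * r = units_card" and "t < m - 1"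
  shows "\<not> units_card dvd Suc t * r"
proof -
  have "r > 0" using assms(1) units_card_pos by (cases r) auto
  moreover have "Suc t < m" using assms(2) by simp
  ultimately have "0 < Suc t * r" "Suc t * r < m * r"
    using mult_less_mono1[of "Suc t" m r] by simp_all
  then show ?thesis using assms(1) by (auto dest: dvd_imp_le)
qed

lemma norm_weighted_jacobi_sums_ge:
  assumes mr: "m * r = units_card" and lr: "l * r' = units_card"
    and weights: "\<And>t u. norm (w t u) = 1" "w 0 0 = 1"
  shows "real CARD('a) - 2 -
      (real (m - 1) + real (l - 1) + real (m - 1) * real (l - 1) * sqrt (real CARD('a)))
    \<le> norm (\<Sum>t<m. \<Sum>u<l. w t u * jacobi_sum (t * r) (u * r'))"
proof -
  obtain m' l' where m: "m = Suc m'" and l: "l = Suc l'"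
    using mr lr units_card_pos by (cases m; cases l) auto
  define T where "T = (\<lambda>t u. w t u * jacobi_sum (t * r) (u * r'))"
  define A B C where "A = (\<Sum>u<l'. T 0 (Suc u))" and "B = (\<Sum>t<m'. T (Suc t) 0)"
    and "C = (\<Sum>t<m'. \<Sum>u<l'. T (Suc t) (Suc u))"
  have split: "(\<Sum>t<m. \<Sum>u<l. T t u) = T 0 0 + A + B + C"
    unfolding m l A_def B_def C_def by (simp only: sum.lessThan_Suc_shift sum.distrib add_ac)
  have "T 0 0 = of_nat CARD('a) - 2"
    by (simp add: T_def weights jacobi_sum_zero_zero)
  then have T00: "norm (T 0 0) = real CARD('a) - 2"
    using card_ge_two by (metis norm_of_nat of_nat_diff of_nat_numeral)
  have "norm A \<le> (\<Sum>u<l'. 1)"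
    unfolding A_def T_def using not_dvd_multiple_below[OF lr] l
    by (intro sum_norm_le) (simp add: norm_mult weights jacobi_sum_zero_left)
  then have nA: "norm A \<le> real l'" by simp
  have "norm B \<le> (\<Sum>t<m'. 1)"
    unfolding B_def T_def using not_dvd_multiple_below[OF mr] m
    by (intro sum_norm_le) (simp add: norm_mult weights jacobi_sum_zero_right)
  then have nB: "norm B \<le> real m'" by simp
  have "norm C \<le> (\<Sum>t<m'. \<Sum>u<l'. sqrt (real CARD('a)))"
    unfolding C_def T_def
    using not_dvd_multiple_below[OF mr] not_dvd_multiple_below[OF lr] m l
    by (intro sum_norm_le order_trans[OF norm_sum] sum_mono)
      (simp add: norm_mult weights norm_jacobi_sum_le)
  then have nC: "norm C \<le> real m' * real l' * sqrt (real CARD('a))" by simp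
  have "norm (T 0 0) \<le> norm (T 0 0 + A + B + C) + norm A + norm B + norm C"
    using norm_triangle_ineq4[of "T 0 0 + A + B + C" "A + B + C"]
      norm_triangle_ineq[of A "B + C"] norm_triangle_ineq[of B C] by (simp add: add.assoc)
  moreover have "(\<Sum>t<m. \<Sum>u<l. w t u * jacobi_sum (t * r) (u * r')) = T 0 0 + A + B + C"
    unfolding split[symmetric] by (simp add: T_def)
  ultimately show ?thesis using T00 nA nB nC m l by simp
qed

lemma diagonal_equation_solvable:
  fixes c1 c2 :: 'a
  assumes "m dvd units_card" and "l dvd units_card" and "c1 \<noteq> 0" and "c2 \<noteq> 0"
    and bound: "real (m - 1) + real (l - 1) + real (m - 1) * real (l - 1) * sqrt (real CARD('a))
      < real CARD('a) - 2"
  shows "\<exists>x y. x \<noteq> 0 \<and> y \<noteq> 0 \<and> c1 * x ^ m + c2 * y ^ l = 1"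
proof (rule ccontr)
  assume no_solution: "\<not> ?thesis"
  define r r' where "r = units_card div m" and "r' = units_card div l"
  define w where "w t u = character (t * r) (inverse c1) * character (u * r') (inverse c2)" for t u
  have indicators_vanish:
    "(\<Sum>t<m. character (t * r) (a / c1)) * (\<Sum>u<l. character (u * r') ((1 - a) / c2)) = 0" for a
  proof -
    have "\<not> (a / c1 \<noteq> 0 \<and> m dvd dlog (a / c1) \<and> (1 - a) / c2 \<noteq> 0 \<and> l dvd dlog ((1 - a) / c2))"
    proof
      assume "a / c1 \<noteq> 0 \<and> m dvd dlog (a / c1) \<and> (1 - a) / c2 \<noteq> 0 \<and> l dvd dlog ((1 - a) / c2)"
      then obtain x y where "x \<noteq> 0" "x ^ m = a / c1" "y \<noteq> 0" "y ^ l = (1 - a) / c2"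
        using exists_power_iff[of m "a / c1"] exists_power_iff[of l "(1 - a) / c2"] assms(1,2)
        by (auto simp: gcd_nat.absorb1)
      moreover have "c1 * x ^ m + c2 * y ^ l = 1" using \<open>x ^ m = a / c1\<close> \<open>y ^ l = (1 - a) / c2\<close> assms(3,4) by simp
      ultimately show False using no_solution by blast
    qed
    then show ?thesis
      unfolding r_def r'_def using assms(1,2) by (auto simp: sum_character_power_indicator)
  qed
  have "(\<Sum>t<m. \<Sum>u<l. w t u * jacobi_sum (t * r) (u * r')) =
      (\<Sum>a\<in>UNIV. (\<Sum>t<m. character (t * r) (a / c1)) * (\<Sum>u<l. character (u * r') ((1 - a) / c2)))"
    unfolding w_def by (rule sum_character_products_eq_jacobi_sums[symmetric])
  also have "\<dots> = 0" by (simp add: indicators_vanish)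
  finally have "norm (\<Sum>t<m. \<Sum>u<l. w t u * jacobi_sum (t * r) (u * r')) = 0" by simp
  moreover have "real CARD('a) - 2 -
      (real (m - 1) + real (l - 1) + real (m - 1) * real (l - 1) * sqrt (real CARD('a)))
    \<le> norm (\<Sum>t<m. \<Sum>u<l. w t u * jacobi_sum (t * r) (u * r'))"
  proof (rule norm_weighted_jacobi_sums_ge)
    show "m * r = units_card" "l * r' = units_card"
      using assms(1,2) by (simp_all add: r_def r'_def)
    show "norm (w t u) = 1" for t u
      using assms(3,4) by (simp add: w_def norm_mult norm_character)
    show "w 0 0 = 1" using assms(3,4) by (simp add: w_def character_zero_index)
  qed
  ultimately show False using bound by linarith
qed

lemma exists_affine_frobenius_quotient:
  fixes \<alpha> \<beta> c :: 'a
  assumes card: "CARD('a) = q ^ n" and "k \<ge> 1" and "d \<noteq> h"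
    and small: "2 * (k + nat \<bar>int d - int h\<bar>) \<le> n"
    and "\<alpha> \<noteq> 0" and "\<beta> \<noteq> 0" and "c \<noteq> 0"
  shows "\<exists>x y. x \<noteq> 0 \<and> y \<noteq> 0 \<and> \<alpha> * x ^ (q ^ k - 1) + \<beta> = y ^ q ^ h / (c * y ^ q ^ d)"
proof -
  define s where "s = nat \<bar>int d - int h\<bar>"
  define m l where "m = gcd (q ^ k - 1) units_card" and "l = gcd (q ^ s - 1) units_card"
  have q: "q \<ge> 2" using card by (rule card_base_ge_two)
  have "s \<ge> 1" using \<open>d \<noteq> h\<close> by (simp add: s_def)
  have qk: "q ^ k \<ge> 2" using q \<open>k \<ge> 1\<close> self_le_power[of q k] by simp
  have qs: "q ^ s \<ge> 2" using q \<open>s \<ge> 1\<close> self_le_power[of q s] by simp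
  have "m \<le> q ^ k - 1" "l \<le> q ^ s - 1" "m > 0" "l > 0"
    using qk qs units_card_pos by (simp_all add: m_def l_def gcd_le1_nat)
  then have "m + 1 \<le> q ^ k" "l + 1 \<le> q ^ s" "m \<ge> 1" "l \<ge> 1" by linarith+
  then have "real (m + 1) \<le> real (q ^ k)" "real (l + 1) \<le> real (q ^ s)" "m \<ge> 1" "l \<ge> 1"
    by (simp_all only: of_nat_le_iff)
  then have "real (m - 1) \<le> real (q ^ k) - 2" "real (l - 1) \<le> real (q ^ s) - 2"
    by (simp_all add: of_nat_diff)
  moreover have "real (q ^ k) * real (q ^ s) \<le> sqrt (real CARD('a))"
  proof (rule real_le_rsqrt)
    have "(real (q ^ k) * real (q ^ s))\<^sup>2 = real (q ^ (2 * (k + s)))"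
      by (simp add: power_mult_distrib power_add mult.commute[of 2] flip: power_mult)
    also have "\<dots> \<le> real CARD('a)"
      using small q unfolding card s_def by (simp add: power_increasing)
    finally show "(real (q ^ k) * real (q ^ s))\<^sup>2 \<le> real CARD('a)" .
  qed
  ultimately have "real (m - 1) + real (l - 1) + real (m - 1) * real (l - 1) * sqrt (real CARD('a))
      < sqrt (real CARD('a)) * sqrt (real CARD('a)) - 2"
    using qk qs by (intro sum_prod_lt_square_minus_two) simp_all
  then have bound: "real (m - 1) + real (l - 1) + real (m - 1) * real (l - 1) * sqrt (real CARD('a))
      < real CARD('a) - 2"
    by simp
  have "m dvd units_card" "l dvd units_card" "- \<alpha> / \<beta> \<noteq> 0" "1 / (c * \<beta>) \<noteq> 0"
    using assms(5-7) by (simp_all add: m_def l_def)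
  from diagonal_equation_solvable[OF this bound]
  obtain u v where uv: "u \<noteq> 0" "v \<noteq> 0" "(- \<alpha> / \<beta>) * u ^ m + (1 / (c * \<beta>)) * v ^ l = 1"
    by blast
  obtain x where x: "x \<noteq> 0" "x ^ (q ^ k - 1) = u ^ m"
    using exists_power_gcd_iff[of "q ^ k - 1" "u ^ m"] uv(1) unfolding m_def by blast
  obtain w where "w \<noteq> 0" "w ^ (q ^ s - 1) = v ^ l"
    using exists_power_gcd_iff[of "q ^ s - 1" "v ^ l"] uv(2) unfolding l_def by blast
  moreover have "nat \<bar>int h - int d\<bar> = s" by (simp add: s_def)
  moreover have "coprime q units_card"
    using coprime_power_minus_one[of q n] q small \<open>k \<ge> 1\<close> by (simp add: units_card_def card)
  ultimately obtain y where y: "y \<noteq> 0" "y ^ q ^ h / y ^ q ^ d = v ^ l"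
    using exists_frobenius_quotient_iff[of q h d "v ^ l"] q by auto
  have "y ^ q ^ h / (c * y ^ q ^ d) = v ^ l / c"
    using y(2) by (simp add: mult.commute[of c] flip: divide_divide_eq_left)
  also have "\<dots> = \<alpha> * x ^ (q ^ k - 1) + \<beta>"
    using uv(3) x(2) assms(5-7) by (simp add: field_simps)
  finally have "\<alpha> * x ^ (q ^ k - 1) + \<beta> = y ^ q ^ h / (c * y ^ q ^ d)" ..
  then show ?thesis using x(1) y(1) by blast
qed

lemma Lset_inter_sigmaL_iff_norm:
  fixes \<alpha> \<beta> c :: 'a
  assumes card: "CARD('a) = q ^ n" and "n > 0" and "\<alpha> \<noteq> 0" and "c \<noteq> 0" and "d = h \<or> \<beta> = 0"
  shows "Lset (\<lambda>x. \<alpha> * x ^ (q ^ k) + \<beta> * x) \<inter> sigmaL q h (\<lambda>y. c * y ^ (q ^ d)) \<noteq> {} \<longleftrightarrow>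
    normq q n (gcd n (gcd k (nat \<bar>int d - int h\<bar>))) ((1 - \<beta> * c) / (\<alpha> * c)) = 1"
proof -
  have "q > 0" using card_base_ge_two[OF card] by simp
  have "\<alpha> * x ^ (q ^ k - 1) + \<beta> = y ^ q ^ h / (c * y ^ q ^ d) \<longleftrightarrow>
      x ^ (q ^ k - 1) * (y ^ q ^ d / y ^ q ^ h) = (1 - \<beta> * c) / (\<alpha> * c)" if "y \<noteq> 0" for x y :: 'a
    by (rule affine_quotient_eq_iff) (use assms(3-5) that in auto)
  then have "Lset (\<lambda>x. \<alpha> * x ^ (q ^ k) + \<beta> * x) \<inter> sigmaL q h (\<lambda>y. c * y ^ (q ^ d)) \<noteq> {} \<longleftrightarrow>
      (\<exists>x y. x \<noteq> 0 \<and> y \<noteq> 0 \<and> x ^ (q ^ k - 1) * (y ^ q ^ d / y ^ q ^ h) = (1 - \<beta> * c) / (\<alpha> * c))"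
    unfolding Lset_inter_sigmaL_monomial_iff[OF assms(4) \<open>q > 0\<close>] by blast
  then show ?thesis
    unfolding normq_def exists_power_times_frobenius_quotient_iff_norm[OF card \<open>n > 0\<close>, symmetric] .
qed

lemma Lset_inter_sigmaL_nonempty:
  fixes \<alpha> \<beta> c :: 'a
  assumes "CARD('a) = q ^ n" and "k \<ge> 1" and "d \<noteq> h" and "2 * (k + nat \<bar>int d - int h\<bar>) \<le> n"
    and "\<alpha> \<noteq> 0" and "\<beta> \<noteq> 0" and "c \<noteq> 0"
  shows "Lset (\<lambda>x. \<alpha> * x ^ (q ^ k) + \<beta> * x) \<inter> sigmaL q h (\<lambda>y. c * y ^ (q ^ d)) \<noteq> {}"
proof -
  have "q > 0" using card_base_ge_two[OF assms(1)] by simp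
  show ?thesis
    unfolding Lset_inter_sigmaL_monomial_iff[OF assms(7) \<open>q > 0\<close>]
    using exists_affine_frobenius_quotient[OF assms] .
qed

end

theorem proposition3p13:
  fixes \<alpha> \<beta> ad :: "'a::{finite,field}" and q n k d h :: nat
  assumes "prime_power q" and "n \<ge> 2" and "CARD('a) = q ^ n"
    and "\<alpha> \<noteq> 0" and "1 \<le> k" and "k < n"
    and "ad \<noteq> 0" and "d < n" and "h < n"
  shows "(d = h \<or> \<beta> = 0 \<longrightarrow>
           (Lset (\<lambda>x. \<alpha> * x ^ (q ^ k) + \<beta> * x) \<inter> sigmaL q h (\<lambda>y. ad * y ^ (q ^ d)) \<noteq> {}
            \<longleftrightarrow> normq q n (nat (gcd (int n) (gcd (int k) (int d - int h))))
                   ((1 - \<beta> * ad) / (\<alpha> * ad)) = 1))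
       \<and> (d \<noteq> h \<and> \<beta> \<noteq> 0 \<and> 2 * (int k + \<bar>int d - int h\<bar>) \<le> int n \<longrightarrow>
           Lset (\<lambda>x. \<alpha> * x ^ (q ^ k) + \<beta> * x) \<inter> sigmaL q h (\<lambda>y. ad * y ^ (q ^ d)) \<noteq> {})"
proof -
  obtain g :: 'a where "finite_field_generator g"
    using finite_field_generator_exists by blast
  then interpret finite_field_generator g .
  show ?thesis
  proof (intro conjI impI)
    assume "d = h \<or> \<beta> = 0"
    then show "Lset (\<lambda>x. \<alpha> * x ^ (q ^ k) + \<beta> * x) \<inter> sigmaL q h (\<lambda>y. ad * y ^ (q ^ d)) \<noteq> {} \<longleftrightarrow>
        normq q n (nat (gcd (int n) (gcd (int k) (int d - int h)))) ((1 - \<beta> * ad) / (\<alpha> * ad)) = 1"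
      unfolding nat_gcd_int_diff using assms(2-4,7) by (intro Lset_inter_sigmaL_iff_norm) simp_all
  next
    assume asm: "d \<noteq> h \<and> \<beta> \<noteq> 0 \<and> 2 * (int k + \<bar>int d - int h\<bar>) \<le> int n"
    then have "int (2 * (k + nat \<bar>int d - int h\<bar>)) \<le> int n" by simp
    then have "2 * (k + nat \<bar>int d - int h\<bar>) \<le> n" by (simp only: of_nat_le_iff)
    then show "Lset (\<lambda>x. \<alpha> * x ^ (q ^ k) + \<beta> * x) \<inter> sigmaL q h (\<lambda>y. ad * y ^ (q ^ d)) \<noteq> {}"
      using asm assms(3-5,7) by (intro Lset_inter_sigmaL_nonempty) simp_all
  qed
qed

end
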